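(* The classes of coherent weakly Hausdorff spaces and of compact coherent weakly Hausdorff spaces are not $\omega$-projective. Moreover, there is an ep-system $(p_{mn}\colon X_n\to X_m)_{m\le n\in\mathbb N}$ of compact coherent weakly Hausdorff spaces whose projective limit in the category of topological spaces is not weakly Hausdorff.
   Context: A projective system of topological spaces consists of a directed preordered set $(I,\sqsubseteq)$, spaces $X_i$ and continuous maps $p_{ij}\colon X_j\to X_i$ for $i\sqsubseteq j$ with $p_{ii}=\mathrm{id}$ and $p_{ij}\circ p_{jk}=p_{ik}$; its projective limit is its limit in the category of topological spaces. A class is $\omega$-projective if it is closed under projective limits of systems whose index set has a countable cofinal subset. The specialization preorder is $x\le y$ iff every open neighbourhood of $x$ contains $y$; $\uparrow x$ is the set of points above $x$; saturated means upward closed. A space is coherent if the intersection of any two compact saturated subsets is compact (no separation axiom in compactness). A space is weakly Hausdorff if for any two points $x,y$ and every open neighbourhood $W$ of $\uparrow x\cap\uparrow y$ there are open neighbourhoods $U$ of $x$ and $V$ of $y$ with $U\cap V\subseteq W$. A continuous map $p\colon Y\to X$ is a projection if there is a continuous $e\colon X\to Y$ with $p\circ e=\mathrm{id}_X$ and $e\circ p\le\mathrm{id}_Y$ pointwise in the specialization preorder of $Y$; an ep-system is a projective system whose bonding maps are projections. *)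

theory Defs
  imports "HOL-Analysis.Analysis"
begin

definition spec_le :: "'a topology \<Rightarrow> 'a \<Rightarrow> 'a \<Rightarrow> bool" where
  "spec_le X x y \<longleftrightarrow> x \<in> topspace X \<and> y \<in> topspace X \<and>
     (\<forall>U. openin X U \<and> x \<in> U \<longrightarrow> y \<in> U)"

definition upset :: "'a topology \<Rightarrow> 'a \<Rightarrow> 'a set" where
  "upset X x = {y. spec_le X x y}"

definition saturated_in :: "'a topology \<Rightarrow> 'a set \<Rightarrow> bool" where
  "saturated_in X S \<longleftrightarrow> S \<subseteq> topspace X \<and> (\<forall>x\<in>S. upset X x \<subseteq> S)"

definition coherent_space :: "'a topology \<Rightarrow> bool" where
  "coherent_space X \<longleftrightarrow>
     (\<forall>K L. compactin X K \<and> saturated_in X K \<and> compactin X L \<and> saturated_in X L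
        \<longrightarrow> compactin X (K \<inter> L))"

definition weakly_hausdorff :: "'a topology \<Rightarrow> bool" where
  "weakly_hausdorff X \<longleftrightarrow>
     (\<forall>x\<in>topspace X. \<forall>y\<in>topspace X. \<forall>W. openin X W \<and> upset X x \<inter> upset X y \<subseteq> W
        \<longrightarrow> (\<exists>U V. openin X U \<and> openin X V \<and> x \<in> U \<and> y \<in> V \<and> U \<inter> V \<subseteq> W))"

definition proj_system ::
  "'i set \<Rightarrow> ('i \<Rightarrow> 'i \<Rightarrow> bool) \<Rightarrow> ('i \<Rightarrow> 'a topology) \<Rightarrow> ('i \<Rightarrow> 'i \<Rightarrow> 'a \<Rightarrow> 'a) \<Rightarrow> bool" where
  "proj_system I le X p \<longleftrightarrow>
     I \<noteq> {} \<and>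
     (\<forall>i\<in>I. le i i) \<and>
     (\<forall>i\<in>I. \<forall>j\<in>I. \<forall>k\<in>I. le i j \<and> le j k \<longrightarrow> le i k) \<and>
     (\<forall>i\<in>I. \<forall>j\<in>I. \<exists>k\<in>I. le i k \<and> le j k) \<and>
     (\<forall>i\<in>I. \<forall>j\<in>I. le i j \<longrightarrow> continuous_map (X j) (X i) (p i j)) \<and>
     (\<forall>i\<in>I. \<forall>x\<in>topspace (X i). p i i x = x) \<and>
     (\<forall>i\<in>I. \<forall>j\<in>I. \<forall>k\<in>I. le i j \<and> le j k \<longrightarrow>
        (\<forall>x\<in>topspace (X k). p i j (p j k x) = p i k x))"

definition has_countable_cofinal :: "'i set \<Rightarrow> ('i \<Rightarrow> 'i \<Rightarrow> bool) \<Rightarrow> bool" where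
  "has_countable_cofinal I le \<longleftrightarrow> (\<exists>J\<subseteq>I. countable J \<and> (\<forall>i\<in>I. \<exists>j\<in>J. le i j))"

definition proj_limit ::
  "'i set \<Rightarrow> ('i \<Rightarrow> 'i \<Rightarrow> bool) \<Rightarrow> ('i \<Rightarrow> 'a topology) \<Rightarrow> ('i \<Rightarrow> 'i \<Rightarrow> 'a \<Rightarrow> 'a) \<Rightarrow> ('i \<Rightarrow> 'a) topology" where
  "proj_limit I le X p = subtopology (product_topology X I)
     {x \<in> topspace (product_topology X I). \<forall>i\<in>I. \<forall>j\<in>I. le i j \<longrightarrow> p i j (x j) = x i}"

definition is_projection :: "'a topology \<Rightarrow> 'b topology \<Rightarrow> ('a \<Rightarrow> 'b) \<Rightarrow> bool" where
  "is_projection Y X p \<longleftrightarrow> continuous_map Y X p \<and>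
     (\<exists>e. continuous_map X Y e \<and> (\<forall>x\<in>topspace X. p (e x) = x) \<and>
          (\<forall>y\<in>topspace Y. spec_le Y (e (p y)) y))"

definition ep_system ::
  "'i set \<Rightarrow> ('i \<Rightarrow> 'i \<Rightarrow> bool) \<Rightarrow> ('i \<Rightarrow> 'a topology) \<Rightarrow> ('i \<Rightarrow> 'i \<Rightarrow> 'a \<Rightarrow> 'a) \<Rightarrow> bool" where
  "ep_system I le X p \<longleftrightarrow> proj_system I le X p \<and>
     (\<forall>i\<in>I. \<forall>j\<in>I. le i j \<longrightarrow> is_projection (X j) (X i) (p i j))"

end

(* Let X_n be the Alexandrov space (open sets = upsets) of the poset formed by two chains
   a_0 < ... < a_n and b_0 < ... < b_n below an infinite chain c_0 < c_1 < ..., with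
   a_k, b_k <= c_m iff k <= m. Finitely generated upsets are compact, meets of principal
   upsets are finitely generated and every point lies above a_0 or b_0, so X_n is compact,
   coherent and weakly Hausdorff. The bonding map X_n -> X_m cuts the two short chains at m
   and fixes the c's; the inclusion of X_m is its embedding, so this is an ep-system.
   In the limit the threads a = (a_n) and b = (b_n) have no common upper bound: above
   both, the n-th coordinate must be some c_k with k >= n, whereas a thread of c's is
   constant. Yet a basic neighbourhood of a (or b) restricts only finitely many
   coordinates, so it contains the constant thread c_m for all large m. Hence a and b have
   no disjoint neighbourhoods although their upsets are disjoint, and the limit is not
   weakly Hausdorff. The same system refutes omega-projectivity of both classes. *)

theory Submission
  imports Defs
begin

section \<open>Alexandrov topologies of preorders\<close>

definition alexandrov_topology :: "'a set \<Rightarrow> ('a \<Rightarrow> 'a \<Rightarrow> bool) \<Rightarrow> 'a topology" where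
  "alexandrov_topology S R = topology (\<lambda>U. U \<subseteq> S \<and> (\<forall>x\<in>U. \<forall>y\<in>S. R x y \<longrightarrow> y \<in> U))"

lemma openin_alexandrov_topology:
  "openin (alexandrov_topology S R) U \<longleftrightarrow> U \<subseteq> S \<and> (\<forall>x\<in>U. \<forall>y\<in>S. R x y \<longrightarrow> y \<in> U)"
proof -
  have "istopology (\<lambda>U. U \<subseteq> S \<and> (\<forall>x\<in>U. \<forall>y\<in>S. R x y \<longrightarrow> y \<in> U))"
    unfolding istopology_def by blast
  then show ?thesis
    by (simp add: alexandrov_topology_def topology_inverse')
qed

lemma topspace_alexandrov_topology [simp]: "topspace (alexandrov_topology S R) = S"
  by (auto simp: topspace_def openin_alexandrov_topology)

lemma continuous_map_alexandrov_topology: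
  assumes "f ` S \<subseteq> S'" and "\<And>x y. x \<in> S \<Longrightarrow> y \<in> S \<Longrightarrow> R x y \<Longrightarrow> R' (f x) (f y)"
  shows "continuous_map (alexandrov_topology S R) (alexandrov_topology S' R') f"
  using assms by (auto simp: continuous_map_def openin_alexandrov_topology)

context
  fixes S :: "'a set" and R :: "'a \<Rightarrow> 'a \<Rightarrow> bool"
  assumes R_refl: "reflp_on S R" and R_trans: "transp_on S R"
begin

lemma openin_alexandrov_principal_upset:
  "x \<in> S \<Longrightarrow> openin (alexandrov_topology S R) {y \<in> S. R x y}"
  using R_trans by (auto simp: openin_alexandrov_topology dest: transp_onD)

lemma spec_le_alexandrov_topology:
  "spec_le (alexandrov_topology S R) x y \<longleftrightarrow> x \<in> S \<and> y \<in> S \<and> R x y"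
proof
  assume xy: "spec_le (alexandrov_topology S R) x y"
  then have "x \<in> S" "y \<in> S" by (auto simp: spec_le_def)
  with xy openin_alexandrov_principal_upset R_refl show "x \<in> S \<and> y \<in> S \<and> R x y"
    unfolding spec_le_def by (metis (no_types, lifting) mem_Collect_eq reflp_onD)
qed (auto simp: spec_le_def openin_alexandrov_topology)

lemma upset_alexandrov_topology:
  "x \<in> S \<Longrightarrow> upset (alexandrov_topology S R) x = {y \<in> S. R x y}"
  by (auto simp: upset_def spec_le_alexandrov_topology)

lemma weakly_hausdorff_alexandrov_topology: "weakly_hausdorff (alexandrov_topology S R)"
  unfolding weakly_hausdorff_def
proof (intro ballI allI impI)
  fix x y W
  assume "x \<in> topspace (alexandrov_topology S R)" "y \<in> topspace (alexandrov_topology S R)"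
    and W: "openin (alexandrov_topology S R) W \<and>
      upset (alexandrov_topology S R) x \<inter> upset (alexandrov_topology S R) y \<subseteq> W"
  then have "x \<in> S" "y \<in> S" by simp_all
  with W R_refl show "\<exists>U V. openin (alexandrov_topology S R) U \<and> openin (alexandrov_topology S R) V
      \<and> x \<in> U \<and> y \<in> V \<and> U \<inter> V \<subseteq> W"
    by (intro exI[of _ "{z \<in> S. R x z}"] exI[of _ "{z \<in> S. R y z}"])
      (auto simp: upset_alexandrov_topology openin_alexandrov_principal_upset reflp_onD)
qed

lemma compactin_alexandrov_finitely_generated:
  assumes "finite F" "F \<subseteq> S"
  shows "compactin (alexandrov_topology S R) {y \<in> S. \<exists>x\<in>F. R x y}"
  unfolding compactin_def
proof (intro conjI allI impI)
  fix \<U> assume \<U>: "(\<forall>U\<in>\<U>. openin (alexandrov_topology S R) U) \<and> {y \<in> S. \<exists>x\<in>F. R x y} \<subseteq> \<Union>\<U>"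
  moreover have "F \<subseteq> {y \<in> S. \<exists>x\<in>F. R x y}"
    using assms(2) R_refl by (auto simp: reflp_on_def)
  ultimately have "\<forall>x\<in>F. \<exists>U\<in>\<U>. x \<in> U"
    by blast
  then obtain g where g: "\<And>x. x \<in> F \<Longrightarrow> g x \<in> \<U> \<and> x \<in> g x" by metis
  have "{y \<in> S. \<exists>x\<in>F. R x y} \<subseteq> \<Union>(g ` F)"
    using g \<U> by (fastforce simp: openin_alexandrov_topology)
  with g assms(1) show "\<exists>\<F>. finite \<F> \<and> \<F> \<subseteq> \<U> \<and> {y \<in> S. \<exists>x\<in>F. R x y} \<subseteq> \<Union>\<F>"
    by (intro exI[of _ "g ` F"]) auto
qed auto

lemma compact_saturated_alexandrov_finitely_generated:
  assumes "compactin (alexandrov_topology S R) K" "saturated_in (alexandrov_topology S R) K"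
  obtains F where "finite F" "F \<subseteq> K" "K = {y \<in> S. \<exists>x\<in>F. R x y}"
proof -
  have KS: "K \<subseteq> S"
    using assms(1) by (simp add: compactin_def)
  have "K \<subseteq> \<Union>((\<lambda>x. {y \<in> S. R x y}) ` K)"
    using KS R_refl by (auto simp: reflp_on_def)
  moreover have "\<forall>U\<in>(\<lambda>x. {y \<in> S. R x y}) ` K. openin (alexandrov_topology S R) U"
    using KS openin_alexandrov_principal_upset by blast
  ultimately obtain \<F> where "finite \<F>" "\<F> \<subseteq> (\<lambda>x. {y \<in> S. R x y}) ` K" "K \<subseteq> \<Union>\<F>"
    using assms(1) unfolding compactin_def by meson
  then obtain F where F: "F \<subseteq> K" "finite F" "\<F> = (\<lambda>x. {y \<in> S. R x y}) ` F"
    by (meson finite_subset_image)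
  have "{y \<in> S. \<exists>x\<in>F. R x y} \<subseteq> K"
  proof clarify
    fix x y assume "y \<in> S" "x \<in> F" "R x y"
    moreover have "upset (alexandrov_topology S R) x \<subseteq> K"
      using assms(2) \<open>x \<in> F\<close> F(1) by (auto simp: saturated_in_def)
    moreover have "x \<in> S"
      using \<open>x \<in> F\<close> F(1) KS by blast
    ultimately show "y \<in> K"
      using upset_alexandrov_topology by blast
  qed
  with F \<open>K \<subseteq> \<Union>\<F>\<close> show thesis
    by (intro that[of F]) auto
qed

lemma coherent_space_alexandrov_topology:
  assumes meets: "\<And>x y. x \<in> S \<Longrightarrow> y \<in> S \<Longrightarrow>
    \<exists>Z. finite Z \<and> Z \<subseteq> S \<and> (\<forall>w\<in>S. R x w \<and> R y w \<longleftrightarrow> (\<exists>z\<in>Z. R z w))"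
  shows "coherent_space (alexandrov_topology S R)"
  unfolding coherent_space_def
proof (intro allI impI)
  fix K L
  assume "compactin (alexandrov_topology S R) K \<and> saturated_in (alexandrov_topology S R) K \<and>
    compactin (alexandrov_topology S R) L \<and> saturated_in (alexandrov_topology S R) L"
  then have K: "compactin (alexandrov_topology S R) K" "saturated_in (alexandrov_topology S R) K"
    and L: "compactin (alexandrov_topology S R) L" "saturated_in (alexandrov_topology S R) L"
    by simp_all
  obtain F where F: "finite F" "F \<subseteq> K" "K = {y \<in> S. \<exists>x\<in>F. R x y}"
    by (rule compact_saturated_alexandrov_finitely_generated[OF K])
  obtain G where G: "finite G" "G \<subseteq> L" "L = {y \<in> S. \<exists>x\<in>G. R x y}"
    by (rule compact_saturated_alexandrov_finitely_generated[OF L])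
  have "F \<subseteq> S" "G \<subseteq> S"
    using F(2,3) G(2,3) by auto
  define Z where "Z x y = (SOME Z. finite Z \<and> Z \<subseteq> S \<and> (\<forall>w\<in>S. R x w \<and> R y w \<longleftrightarrow> (\<exists>z\<in>Z. R z w)))"
    for x y
  have Z: "finite (Z x y) \<and> Z x y \<subseteq> S \<and> (\<forall>w\<in>S. R x w \<and> R y w \<longleftrightarrow> (\<exists>z\<in>Z x y. R z w))"
    if "x \<in> S" "y \<in> S" for x y
    unfolding Z_def by (fact someI_ex[OF meets[OF that]])
  define H where "H = (\<Union>x\<in>F. \<Union>y\<in>G. Z x y)"
  have "finite H"
    unfolding H_def using F(1) G(1) \<open>F \<subseteq> S\<close> \<open>G \<subseteq> S\<close> Z by (intro finite_UN_I) auto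
  have "H \<subseteq> S"
    unfolding H_def using \<open>F \<subseteq> S\<close> \<open>G \<subseteq> S\<close> Z by fast
  have "K \<inter> L = {w \<in> S. \<exists>z\<in>H. R z w}"
  proof (intro set_eqI iffI)
    fix w assume "w \<in> K \<inter> L"
    then obtain x y where "x \<in> F" "y \<in> G" "w \<in> S" "R x w" "R y w"
      using F(3) G(3) by blast
    then show "w \<in> {w \<in> S. \<exists>z\<in>H. R z w}"
      using \<open>F \<subseteq> S\<close> \<open>G \<subseteq> S\<close> Z[of x y] unfolding H_def by blast
  next
    fix w assume "w \<in> {w \<in> S. \<exists>z\<in>H. R z w}"
    then obtain x y z where xyz: "x \<in> F" "y \<in> G" "z \<in> Z x y" "w \<in> S" "R z w"
      unfolding H_def by blast
    then have "R x w" "R y w"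
      using \<open>F \<subseteq> S\<close> \<open>G \<subseteq> S\<close> Z[of x y] by blast+
    with xyz F(3) G(3) show "w \<in> K \<inter> L"
      by blast
  qed
  with compactin_alexandrov_finitely_generated[OF \<open>finite H\<close> \<open>H \<subseteq> S\<close>]
  show "compactin (alexandrov_topology S R) (K \<inter> L)"
    by simp
qed

lemma compact_space_alexandrov_topology:
  assumes "finite F" "F \<subseteq> S" "\<And>y. y \<in> S \<Longrightarrow> \<exists>x\<in>F. R x y"
  shows "compact_space (alexandrov_topology S R)"
proof -
  have "{y \<in> S. \<exists>x\<in>F. R x y} = S"
    using assms(3) by blast
  then show ?thesis
    using compactin_alexandrov_finitely_generated[OF assms(1,2)] by (simp add: compact_space_def)
qed

end

section \<open>Projective limits\<close>

lemma spec_le_continuous_map: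
  assumes "continuous_map X Y f" "spec_le X x y"
  shows "spec_le Y (f x) (f y)"
  unfolding spec_le_def
proof (intro conjI allI impI)
  show "f x \<in> topspace Y" "f y \<in> topspace Y"
    using assms by (auto simp: spec_le_def continuous_map_def)
  fix U assume "openin Y U \<and> f x \<in> U"
  then have "openin X {z \<in> topspace X. f z \<in> U}" "x \<in> {z \<in> topspace X. f z \<in> U}"
    using assms by (auto simp: openin_continuous_map_preimage spec_le_def)
  then show "f y \<in> U"
    using assms(2) unfolding spec_le_def by blast
qed

lemma continuous_map_proj_limit_component:
  "i \<in> I \<Longrightarrow> continuous_map (proj_limit I le X p) (X i) (\<lambda>x. x i)"
  unfolding proj_limit_def
  by (intro continuous_map_from_subtopology continuous_map_product_projection)

lemma spec_le_proj_limit_component: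
  "i \<in> I \<Longrightarrow> spec_le (proj_limit I le X p) x y \<Longrightarrow> spec_le (X i) (x i) (y i)"
  by (rule spec_le_continuous_map[OF continuous_map_proj_limit_component])

lemma proj_limit_neighbourhood:
  assumes "openin (proj_limit I le X p) U" "x \<in> U"
  obtains J where "finite J" "J \<subseteq> I"
    "\<And>y. y \<in> topspace (proj_limit I le X p) \<Longrightarrow> (\<And>i. i \<in> J \<Longrightarrow> spec_le (X i) (x i) (y i)) \<Longrightarrow> y \<in> U"
proof -
  obtain T where T: "openin (product_topology X I) T" "U = T \<inter> topspace (proj_limit I le X p)"
    using assms(1) unfolding proj_limit_def openin_subtopology topspace_subtopology
    using openin_subset by fastforce
  then have "\<exists>V. finite {i \<in> I. V i \<noteq> topspace (X i)} \<and> (\<forall>i\<in>I. openin (X i) (V i)) \<and>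
      x \<in> Pi\<^sub>E I V \<and> Pi\<^sub>E I V \<subseteq> T"
    using assms(2) unfolding openin_product_topology_alt by blast
  then obtain V where V: "finite {i \<in> I. V i \<noteq> topspace (X i)}" "\<And>i. i \<in> I \<Longrightarrow> openin (X i) (V i)"
    "x \<in> Pi\<^sub>E I V" "Pi\<^sub>E I V \<subseteq> T"
    by blast
  show thesis
  proof (rule that[of "{i \<in> I. V i \<noteq> topspace (X i)}"])
    fix y assume y: "y \<in> topspace (proj_limit I le X p)"
      and above: "\<And>i. i \<in> {i \<in> I. V i \<noteq> topspace (X i)} \<Longrightarrow> spec_le (X i) (x i) (y i)"
    have y_prod: "y \<in> topspace (product_topology X I)"
      using y by (simp add: proj_limit_def)
    have "y i \<in> V i" if "i \<in> I" for i
    proof (cases "V i = topspace (X i)")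
      case True
      with y_prod that show ?thesis
        by (simp add: PiE_iff)
    next
      case False
      with above that have "spec_le (X i) (x i) (y i)"
        by blast
      moreover have "x i \<in> V i"
        using V(3) that by (simp add: PiE_iff)
      ultimately show ?thesis
        using V(2) that unfolding spec_le_def by blast
    qed
    with y_prod have "y \<in> Pi\<^sub>E I V"
      by (simp add: PiE_iff)
    with V(4) have "y \<in> T"
      by blast
    with y T(2) show "y \<in> U"
      by blast
  qed (use V(1) in auto)
qed

lemma has_countable_cofinal_countable:
  "countable I \<Longrightarrow> (\<And>i. i \<in> I \<Longrightarrow> le i i) \<Longrightarrow> has_countable_cofinal I le"
  unfolding has_countable_cofinal_def by blast

text \<open>A point (0, k), (1, k) or (2, m) stands for a_k, b_k or c_m respectively.\<close>

definition fork_le :: "nat \<times> nat \<Rightarrow> nat \<times> nat \<Rightarrow> bool" where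
  "fork_le p q \<longleftrightarrow> snd p \<le> snd q \<and> (fst p = fst q \<or> fst q = 2)"

definition fork_points :: "nat \<Rightarrow> (nat \<times> nat) set" where
  "fork_points n = {0, 1} \<times> {..n} \<union> {2} \<times> UNIV"

definition fork_trunc :: "nat \<Rightarrow> nat \<times> nat \<Rightarrow> nat \<times> nat" where
  "fork_trunc n p = (if fst p = 2 then p else (fst p, min (snd p) n))"

lemma fork_le_refl: "fork_le p p"
  by (simp add: fork_le_def)

lemma fork_le_trans: "fork_le p q \<Longrightarrow> fork_le q r \<Longrightarrow> fork_le p r"
  by (auto simp: fork_le_def)

lemma fork_points_mono: "m \<le> n \<Longrightarrow> fork_points m \<subseteq> fork_points n"
  by (auto simp: fork_points_def)

lemma fork_trunc_in_points: "p \<in> fork_points n \<Longrightarrow> fork_trunc m p \<in> fork_points m"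
  by (auto simp: fork_points_def fork_trunc_def)

lemma fork_trunc_eq_self: "p \<in> fork_points m \<Longrightarrow> fork_trunc m p = p"
  by (auto simp: fork_points_def fork_trunc_def)

lemma fork_trunc_le: "fork_le (fork_trunc m p) p"
  by (simp add: fork_le_def fork_trunc_def)

lemma fork_trunc_mono: "fork_le p q \<Longrightarrow> fork_le (fork_trunc m p) (fork_trunc m q)"
  by (auto simp: fork_le_def fork_trunc_def)

lemma fork_trunc_trunc: "l \<le> m \<Longrightarrow> fork_trunc l (fork_trunc m p) = fork_trunc l p"
  by (simp add: fork_trunc_def min.assoc min.absorb2)

lemma fork_common_upper_bounds:
  assumes "p \<in> fork_points n" "q \<in> fork_points n"
  shows "\<exists>Z. finite Z \<and> Z \<subseteq> fork_points n \<and>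
    (\<forall>w\<in>fork_points n. fork_le p w \<and> fork_le q w \<longleftrightarrow> (\<exists>z\<in>Z. fork_le z w))"
proof (intro exI conjI ballI)
  let ?k = "max (snd p) (snd q)"
  let ?Z = "{z \<in> fork_points n. fork_le p z \<and> fork_le q z \<and> snd z = ?k}"
  show "finite ?Z"
    by (rule finite_subset[of _ "{0, 1, 2} \<times> {?k}"]) (auto simp: fork_points_def)
  show "?Z \<subseteq> fork_points n"
    by blast
  fix w assume w: "w \<in> fork_points n"
  show "fork_le p w \<and> fork_le q w \<longleftrightarrow> (\<exists>z\<in>?Z. fork_le z w)"
  proof
    assume "fork_le p w \<and> fork_le q w"
    with assms w have "(fst w, ?k) \<in> ?Z" "fork_le (fst w, ?k) w"
      by (auto simp: fork_le_def fork_points_def)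
    then show "\<exists>z\<in>?Z. fork_le z w"
      by blast
  qed (blast intro: fork_le_trans)
qed

lemma fork_points_bottom: "w \<in> fork_points n \<Longrightarrow> fork_le (0, 0) w \<or> fork_le (1, 0) w"
  by (auto simp: fork_le_def fork_points_def)

text \<open>The spaces must have sets of naturals as points, so a pair is coded as the singleton
  of its Cantor code.\<close>

definition fork_code :: "nat \<times> nat \<Rightarrow> nat set" where
  "fork_code p = {prod_encode p}"

definition fork_decode :: "nat set \<Rightarrow> nat \<times> nat" where
  "fork_decode A = prod_decode (the_elem A)"

lemma fork_decode_code [simp]: "fork_decode (fork_code p) = p"
  by (simp add: fork_code_def fork_decode_def)

lemma fork_code_inject [simp]: "fork_code p = fork_code q \<longleftrightarrow> p = q"
  by (metis fork_decode_code)

definition fork_space :: "nat \<Rightarrow> nat set topology" where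
  "fork_space n = alexandrov_topology (fork_code ` fork_points n)
     (\<lambda>A B. fork_le (fork_decode A) (fork_decode B))"

definition fork_proj :: "nat \<Rightarrow> nat \<Rightarrow> nat set \<Rightarrow> nat set" where
  "fork_proj m n A = fork_code (fork_trunc m (fork_decode A))"

lemma fork_proj_code [simp]: "fork_proj m n (fork_code p) = fork_code (fork_trunc m p)"
  by (simp add: fork_proj_def)

lemma topspace_fork_space [simp]: "topspace (fork_space n) = fork_code ` fork_points n"
  by (simp add: fork_space_def)

lemma reflp_on_fork_decode: "reflp_on S (\<lambda>A B. fork_le (fork_decode A) (fork_decode B))"
  by (simp add: reflp_on_def fork_le_refl)

lemma transp_on_fork_decode: "transp_on S (\<lambda>A B. fork_le (fork_decode A) (fork_decode B))"
  by (auto simp: transp_on_def intro: fork_le_trans)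

lemma spec_le_fork_space:
  "spec_le (fork_space n) (fork_code p) (fork_code q) \<longleftrightarrow>
     p \<in> fork_points n \<and> q \<in> fork_points n \<and> fork_le p q"
  unfolding fork_space_def
  by (auto simp: spec_le_alexandrov_topology[OF reflp_on_fork_decode transp_on_fork_decode])

lemma weakly_hausdorff_fork_space: "weakly_hausdorff (fork_space n)"
  unfolding fork_space_def
  by (rule weakly_hausdorff_alexandrov_topology[OF reflp_on_fork_decode transp_on_fork_decode])

lemma compact_space_fork_space: "compact_space (fork_space n)"
  unfolding fork_space_def
proof (rule compact_space_alexandrov_topology[OF reflp_on_fork_decode transp_on_fork_decode])
  show "finite {fork_code (0, 0), fork_code (1, 0)}" "{fork_code (0, 0), fork_code (1, 0)} \<subseteq> fork_code ` fork_points n"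
    by (auto simp: fork_points_def)
  show "\<exists>x\<in>{fork_code (0, 0), fork_code (1, 0)}. fork_le (fork_decode x) (fork_decode y)"
    if "y \<in> fork_code ` fork_points n" for y
    using that by (auto dest: fork_points_bottom)
qed

lemma coherent_space_fork_space: "coherent_space (fork_space n)"
  unfolding fork_space_def
proof (rule coherent_space_alexandrov_topology[OF reflp_on_fork_decode transp_on_fork_decode])
  fix A B assume "A \<in> fork_code ` fork_points n" "B \<in> fork_code ` fork_points n"
  then obtain p q where pq: "A = fork_code p" "B = fork_code q" "p \<in> fork_points n" "q \<in> fork_points n"
    by blast
  obtain Z where Z: "finite Z" "Z \<subseteq> fork_points n"
    "\<And>w. w \<in> fork_points n \<Longrightarrow> fork_le p w \<and> fork_le q w \<longleftrightarrow> (\<exists>z\<in>Z. fork_le z w)"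
    using fork_common_upper_bounds[OF pq(3,4)] by blast
  show "\<exists>Z. finite Z \<and> Z \<subseteq> fork_code ` fork_points n \<and>
    (\<forall>w\<in>fork_code ` fork_points n. fork_le (fork_decode A) (fork_decode w) \<and> fork_le (fork_decode B) (fork_decode w)
      \<longleftrightarrow> (\<exists>z\<in>Z. fork_le (fork_decode z) (fork_decode w)))"
    by (rule exI[of _ "fork_code ` Z"]) (use Z pq in auto)
qed

lemma continuous_map_fork_proj: "continuous_map (fork_space n) (fork_space m) (fork_proj m n)"
  unfolding fork_space_def
  by (rule continuous_map_alexandrov_topology) (auto intro: fork_trunc_in_points fork_trunc_mono)

lemma is_projection_fork_proj:
  assumes "m \<le> n"
  shows "is_projection (fork_space n) (fork_space m) (fork_proj m n)"
  unfolding is_projection_def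
proof (intro conjI exI[of _ id])
  show "continuous_map (fork_space n) (fork_space m) (fork_proj m n)"
    by (rule continuous_map_fork_proj)
  show "continuous_map (fork_space m) (fork_space n) id"
    unfolding fork_space_def
    by (rule continuous_map_alexandrov_topology) (use fork_points_mono[OF assms] in auto)
  show "\<forall>A\<in>topspace (fork_space m). fork_proj m n (id A) = A"
    by (auto simp: fork_trunc_eq_self)
  show "\<forall>A\<in>topspace (fork_space n). spec_le (fork_space n) (id (fork_proj m n A)) A"
  proof
    fix A assume "A \<in> topspace (fork_space n)"
    then obtain p where p: "A = fork_code p" "p \<in> fork_points n"
      by auto
    then have "fork_trunc m p \<in> fork_points n"
      using fork_trunc_in_points fork_points_mono[OF assms] by blast
    with p show "spec_le (fork_space n) (id (fork_proj m n A)) A"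
      by (simp add: spec_le_fork_space fork_trunc_le)
  qed
qed

lemma ep_system_fork: "ep_system UNIV (\<le>) fork_space fork_proj"
  unfolding ep_system_def proj_system_def
  by (auto simp: continuous_map_fork_proj is_projection_fork_proj fork_trunc_eq_self fork_trunc_trunc)
    (use max.cobounded1 max.cobounded2 in blast)

abbreviation fork_limit :: "(nat \<Rightarrow> nat set) topology" where
  "fork_limit \<equiv> proj_limit UNIV (\<le>) fork_space fork_proj"

lemma topspace_fork_limit:
  "z \<in> topspace fork_limit \<longleftrightarrow>
     (\<forall>n. z n \<in> fork_code ` fork_points n) \<and> (\<forall>m n. m \<le> n \<longrightarrow> fork_proj m n (z n) = z m)"
  by (simp add: proj_limit_def PiE_iff)

lemma fork_lower_thread_in_limit: "c < 2 \<Longrightarrow> (\<lambda>n. fork_code (c, n)) \<in> topspace fork_limit"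
  by (auto simp: topspace_fork_limit fork_points_def fork_trunc_def)

lemma fork_upper_thread_in_limit: "(\<lambda>n. fork_code (2, k)) \<in> topspace fork_limit"
  by (auto simp: topspace_fork_limit fork_points_def fork_trunc_def)

lemma fork_limit_above_lower_threads:
  assumes "spec_le fork_limit (\<lambda>n. fork_code (0, n)) z" "spec_le fork_limit (\<lambda>n. fork_code (1, n)) z"
  obtains k where "n \<le> k" "z n = fork_code (2, k)"
proof -
  have "spec_le (fork_space n) (fork_code (0, n)) (z n)" "spec_le (fork_space n) (fork_code (1, n)) (z n)"
    using spec_le_proj_limit_component[OF UNIV_I assms(1)] spec_le_proj_limit_component[OF UNIV_I assms(2)]
    by simp_all
  moreover have "z \<in> topspace fork_limit"
    using assms(1) by (simp add: spec_le_def)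
  then obtain w where "z n = fork_code w" "w \<in> fork_points n"
    unfolding topspace_fork_limit by blast
  ultimately have "z n = fork_code w" "fst w = 2" "n \<le> snd w"
    by (auto simp: spec_le_fork_space fork_le_def)
  then show thesis
    by (intro that[of "snd w"]) (auto simp: prod_eq_iff)
qed

lemma fork_limit_no_common_upper_bound:
  "upset fork_limit (\<lambda>n. fork_code (0, n)) \<inter> upset fork_limit (\<lambda>n. fork_code (1, n)) = {}"
proof -
  have False if above: "spec_le fork_limit (\<lambda>n. fork_code (0, n)) z" "spec_le fork_limit (\<lambda>n. fork_code (1, n)) z"
    for z
  proof -
    have "z \<in> topspace fork_limit"
      using above(1) by (simp add: spec_le_def)
    then have thread: "fork_proj 0 n (z n) = z 0" for n
      unfolding topspace_fork_limit by blast
    obtain k where k: "z 0 = fork_code (2, k)"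
      using fork_limit_above_lower_threads[OF above] by metis
    obtain k' where "Suc k \<le> k'" "z (Suc k) = fork_code (2, k')"
      using fork_limit_above_lower_threads[OF above] by metis
    \<comment> \<open>the projections fix every c, so a thread of c's is constant\<close>
    with thread[of "Suc k"] k show False
      by (simp add: fork_trunc_def)
  qed
  then show ?thesis
    by (auto simp: upset_def)
qed

lemma fork_limit_neighbourhood_of_lower_thread:
  assumes "openin fork_limit U" "c < 2" "(\<lambda>n. fork_code (c, n)) \<in> U"
  obtains N where "\<And>k. N \<le> k \<Longrightarrow> (\<lambda>n. fork_code (2, k)) \<in> U"
proof -
  obtain J where J: "finite J" "J \<subseteq> UNIV"
    "\<And>y. y \<in> topspace fork_limit \<Longrightarrow> (\<And>i. i \<in> J \<Longrightarrow> spec_le (fork_space i) (fork_code (c, i)) (y i)) \<Longrightarrow> y \<in> U"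
    by (rule proj_limit_neighbourhood[OF assms(1,3)]) simp
  obtain N where N: "\<And>i. i \<in> J \<Longrightarrow> i < N"
    using J(1) by (auto simp: finite_nat_set_iff_bounded)
  have "(\<lambda>n. fork_code (2, k)) \<in> U" if "N \<le> k" for k
  proof (rule J(3)[OF fork_upper_thread_in_limit])
    fix i assume "i \<in> J"
    with N that have "i \<le> k"
      by force
    with assms(2) show "spec_le (fork_space i) (fork_code (c, i)) (fork_code (2, k))"
      by (auto simp: spec_le_fork_space fork_points_def fork_le_def)
  qed
  then show thesis
    by (rule that)
qed

lemma not_weakly_hausdorff_fork_limit: "\<not> weakly_hausdorff fork_limit"
proof
  let ?a = "\<lambda>n. fork_code (0, n)" and ?b = "\<lambda>n. fork_code (1, n)"
  assume "weakly_hausdorff fork_limit"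
  moreover have "?a \<in> topspace fork_limit" "?b \<in> topspace fork_limit"
    by (simp_all add: fork_lower_thread_in_limit)
  moreover have "openin fork_limit {} \<and> upset fork_limit ?a \<inter> upset fork_limit ?b \<subseteq> {}"
    using fork_limit_no_common_upper_bound by simp
  ultimately have "\<exists>U V. openin fork_limit U \<and> openin fork_limit V \<and> ?a \<in> U \<and> ?b \<in> V \<and> U \<inter> V \<subseteq> {}"
    unfolding weakly_hausdorff_def by (elim ballE allE impE) blast+
  then obtain U V where UV: "openin fork_limit U" "openin fork_limit V" "?a \<in> U" "?b \<in> V" "U \<inter> V = {}"
    by blast
  obtain N1 where "\<And>k. N1 \<le> k \<Longrightarrow> (\<lambda>n. fork_code (2, k)) \<in> U"
    by (rule fork_limit_neighbourhood_of_lower_thread[OF UV(1) _ UV(3)]) auto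
  moreover obtain N2 where "\<And>k. N2 \<le> k \<Longrightarrow> (\<lambda>n. fork_code (2, k)) \<in> V"
    by (rule fork_limit_neighbourhood_of_lower_thread[OF UV(2) _ UV(4)]) auto
  ultimately have "(\<lambda>n. fork_code (2, max N1 N2)) \<in> U \<inter> V"
    by simp
  with UV(5) show False
    by blast
qed

theorem corollary5p7:
  shows "(\<exists>(I::nat set) le (X::nat \<Rightarrow> nat set topology) p.
            proj_system I le X p \<and> has_countable_cofinal I le \<and>
            (\<forall>i\<in>I. coherent_space (X i) \<and> weakly_hausdorff (X i)) \<and>
            \<not> (coherent_space (proj_limit I le X p) \<and> weakly_hausdorff (proj_limit I le X p)))
       \<and> (\<exists>(I::nat set) le (X::nat \<Rightarrow> nat set topology) p.
            proj_system I le X p \<and> has_countable_cofinal I le \<and>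
            (\<forall>i\<in>I. compact_space (X i) \<and> coherent_space (X i) \<and> weakly_hausdorff (X i)) \<and>
            \<not> (compact_space (proj_limit I le X p) \<and> coherent_space (proj_limit I le X p)
                 \<and> weakly_hausdorff (proj_limit I le X p)))
       \<and> (\<exists>(X::nat \<Rightarrow> nat set topology) p.
            ep_system UNIV (\<le>) X p \<and>
            (\<forall>n. compact_space (X n) \<and> coherent_space (X n) \<and> weakly_hausdorff (X n)) \<and>
            \<not> weakly_hausdorff (proj_limit UNIV (\<le>) X p))"
proof -
  have "proj_system UNIV (\<le>) fork_space fork_proj"
    using ep_system_fork by (simp add: ep_system_def)
  moreover have "has_countable_cofinal (UNIV :: nat set) (\<le>)"
    by (rule has_countable_cofinal_countable) simp_all
  moreover note ep_system_fork not_weakly_hausdorff_fork_limit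
    compact_space_fork_space coherent_space_fork_space weakly_hausdorff_fork_space
  ultimately show ?thesis
    by (intro conjI exI[of _ UNIV] exI[of _ "(\<le>)"] exI[of _ fork_space] exI[of _ fork_proj]) auto
qed

end
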